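(* Let $\gamma>0$ (arising as $\lim n_i/g_i$ for a sequence of global function fields over $\mathbb{F}_q$ with genera $g_i\to\infty$ and $n_i$ rational places), $m\ge1$, and let $y>0$, $x_1,\dots,x_m\ge0$, $\sigma\ge0$ be real numbers with $y+2\sum_{\ell=1}^m(\ell+1)x_\ell+\sigma/\gamma<1$. Let $\bar t_m=2x_m$ and $\bar t_\ell=2x_\ell+\sum_{\nu=\ell+1}^mx_\nu$ for $1\le\ell\le m-1$. Define $t_1^*$ by $2t_1^*+\sum_{\ell=2}^m(\ell+1)\bar t_\ell=2\sum_{\ell=1}^m(\ell+1)x_\ell$, and for $2\le\ell\le m$ define $t_\ell^*$ inductively by $(\ell+1)t^*_\ell-(\ell+1)\bar t_\ell=\ell t^*_{\ell-1}-\ell\bar t_{\ell-1}$. Let $u=t_1^*+\sum_{\ell=2}^m\ell\bar t_\ell$. Assume: (C1) $\sigma/\gamma\le y/(q-1)$; (C2) for each $1\le\ell\le m$: $\bar t_\ell(y+\sigma/\gamma+u)^{2\ell}<\bigl(1-y-\sigma/\gamma-2\sum_{\nu=1}^m(\nu+1)x_\nu\bigr)^{\ell+1}(y+\sigma/\gamma)^\ell$; (C3) $\frac\sigma\gamma(1-y)<y^2$; (C4) for each $1\le\ell\le m-1$: $(\bar t_{\ell+1})^{\ell+1}(y+\sigma/\gamma+u)\le(t^*_\ell)^{\ell+2}$. Then $I_{y,x_1,\dots,x_m}(\sigma)=S(\sigma,y,0,t_1^*,\bar t_2,\bar t_3,\dots,\bar t_m)$.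
   Context: $E(x)=-x\log_qx-(1-x)\log_q(1-x)$ for $0<x<1$, $E(0)=E(1)=0$. With $T=t_1+\cdots+t_m$ and $W=t_1+2t_2+\cdots+mt_m$: $S(\sigma,y,x,t_1,\dots,t_m)=E(t_m)+\sum_{\ell=1}^{m-1}\bigl(1-\sum_{\nu=\ell+1}^mt_\nu\bigr)E\bigl(\frac{t_\ell}{1-\sum_{\nu=\ell+1}^mt_\nu}\bigr)+(1-T)E\bigl(\frac{y+x+W}{1-T}\bigr)+Z$, where $Z=(y+\sigma/\gamma+W)E\bigl(\frac{y+x+W}{y+\sigma/\gamma+W}\bigr)$ if $\frac{y+x+W}{y+\sigma/\gamma+W}\ge1-\frac1q$ and $Z=(y+\sigma/\gamma+W)-(y+x+W)\log_q(q-1)$ otherwise. $I_{y,x_1,\dots,x_m}(\sigma)$ is the maximum of $S(\sigma,y,x,t_1,\dots,t_m)$ over all real $x,t_1,\dots,t_m$ with $0\le x\le\sigma/\gamma$, $0\le t_\ell\le2x_\ell+\sum_{\nu=\ell+1}^mx_\nu$ ($1\le\ell\le m$), and $\sum_{\ell=1}^m(\ell+1)t_\ell\le2\sum_{\ell=1}^m(\ell+1)x_\ell$. *)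

theory Defs
  imports Complex_Main "HOL-Computational_Algebra.Primes"
begin

text \<open>q-ary entropy function E, with E(0)=E(1)=0 (value outside [0,1] irrelevant).\<close>
definition Ent :: "nat \<Rightarrow> real \<Rightarrow> real" where
  "Ent q x = (if 0 < x \<and> x < 1
              then - x * log (real q) x - (1 - x) * log (real q) (1 - x) else 0)"

definition Sfun :: "nat \<Rightarrow> real \<Rightarrow> nat \<Rightarrow> real \<Rightarrow> real \<Rightarrow> real \<Rightarrow> (nat \<Rightarrow> real) \<Rightarrow> real" where
  "Sfun q \<gamma> m \<sigma> y x t =
    (let T = (\<Sum>l=1..m. t l);
         W = (\<Sum>l=1..m. real l * t l);
         D = y + \<sigma> / \<gamma> + W;
         N = y + x + W;
         Z = (if N / D \<ge> 1 - 1 / real q then D * Ent q (N / D)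
              else D - N * log (real q) (real q - 1))
     in Ent q (t m)
        + (\<Sum>l=1..m-1. (1 - (\<Sum>\<nu>=l+1..m. t \<nu>)) * Ent q (t l / (1 - (\<Sum>\<nu>=l+1..m. t \<nu>))))
        + (1 - T) * Ent q (N / (1 - T))
        + Z)"

definition feasible :: "real \<Rightarrow> nat \<Rightarrow> real \<Rightarrow> (nat \<Rightarrow> real) \<Rightarrow> real \<Rightarrow> (nat \<Rightarrow> real) \<Rightarrow> bool" where
  "feasible \<gamma> m \<sigma> xs x t \<longleftrightarrow>
     0 \<le> x \<and> x \<le> \<sigma> / \<gamma> \<and>
     (\<forall>l\<in>{1..m}. 0 \<le> t l \<and> t l \<le> 2 * xs l + (\<Sum>\<nu>=l+1..m. xs \<nu>)) \<and>
     (\<Sum>l=1..m. real (l + 1) * t l) \<le> 2 * (\<Sum>l=1..m. real (l + 1) * xs l)"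

definition Ifun :: "nat \<Rightarrow> real \<Rightarrow> nat \<Rightarrow> real \<Rightarrow> (nat \<Rightarrow> real) \<Rightarrow> real \<Rightarrow> real" where
  "Ifun q \<gamma> m y xs \<sigma> =
     Sup {Sfun q \<gamma> m \<sigma> y x t | x t. feasible \<gamma> m \<sigma> xs x t}"

definition tbar :: "nat \<Rightarrow> (nat \<Rightarrow> real) \<Rightarrow> nat \<Rightarrow> real" where
  "tbar m xs l = 2 * xs l + (\<Sum>\<nu>=l+1..m. xs \<nu>)"

text \<open>t^*_1 from 2 t^*_1 + sum_{l=2}^m (l+1) tbar_l = 2 sum (l+1) x_l;
  (l+1) t^*_l - (l+1) tbar_l = l t^*_{l-1} - l tbar_{l-1} for 2 \<le> l \<le> m.\<close>
fun tstar :: "nat \<Rightarrow> (nat \<Rightarrow> real) \<Rightarrow> nat \<Rightarrow> real" where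
  "tstar m xs 0 = 0"
| "tstar m xs (Suc 0) =
     (2 * (\<Sum>l=1..m. real (l + 1) * xs l) - (\<Sum>l=2..m. real (l + 1) * tbar m xs l)) / 2"
| "tstar m xs (Suc (Suc k)) =
     tbar m xs (k + 2)
     + (real (k + 2) * tstar m xs (Suc k) - real (k + 2) * tbar m xs (Suc k)) / real (k + 3)"

definition ustar :: "nat \<Rightarrow> (nat \<Rightarrow> real) \<Rightarrow> real" where
  "ustar m xs = tstar m xs 1 + (\<Sum>l=2..m. real l * tbar m xs l)"

end

theory Submission
  imports Defs
begin

text \<open>
  Multiplied by \<open>ln q\<close>, and with \<open>Z\<close> in its entropy branch (which C1 guarantees on the
  whole feasible region), \<open>S\<close> is a sum of terms \<open>-p ln p\<close> of affine functions of \<open>(x, t)\<close>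
  plus the perspective term \<open>D E(N/D) ln q\<close>, hence concave. By the tangent-plane inequality it
  suffices to verify the Karush-Kuhn-Tucker conditions at \<open>(0, t*\<^sub>1, tbar\<^sub>2, ..., tbar\<^sub>m)\<close>.
  The multiplier of the budget constraint \<open>\<Sum>(l+1) t\<^sub>l \<le> 2 \<Sum>(l+1) x\<^sub>l\<close> is half the partial
  derivative in \<open>t\<^sub>1\<close>, nonnegative by C2; the derivative in \<open>t\<^sub>l\<close>, \<open>l \<ge> 2\<close>, dominates \<open>l + 1\<close>
  times the multiplier because iterating C4 gives \<open>tbar\<^sub>l\<^sup>2 D\<^bsup>l-1\<^esup> \<le> t*\<^sub>1\<^bsup>l+1\<^esup>\<close>; and the
  derivative in \<open>x\<close> is negative by C3. Iterating C4 requires \<open>t*\<^sub>l > 0\<close>, which C4 itself forces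
  once one knows that \<open>(l+1)(tbar\<^sub>l - t*\<^sub>l)\<close> does not depend on \<open>l\<close>.
\<close>

section \<open>Entropy in natural units\<close>

definition entr :: "real \<Rightarrow> real" where
  "entr p = - p * ln p"

lemma entr_0 [simp]: "entr 0 = 0" and entr_1 [simp]: "entr 1 = 0"
  by (simp_all add: entr_def)

lemma Ent_times_ln:
  assumes "1 < q" "0 \<le> a" "a \<le> 1"
  shows "Ent q a * ln (real q) = entr a + entr (1 - a)"
proof (cases "0 < a \<and> a < 1")
  case True
  have "ln (real q) > 0" using assms by simp
  with True show ?thesis by (simp add: Ent_def entr_def log_def field_simps)
next
  case False
  with assms have "a = 0 \<or> a = 1" by auto
  then show ?thesis by (auto simp: Ent_def)
qed

lemma mult_entr_divide:
  assumes "0 < R" "0 \<le> b"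
  shows "R * entr (b / R) = entr b + b * ln R"
  using assms by (cases "b = 0") (auto simp: entr_def ln_div field_simps)

lemma mult_Ent_divide_times_ln:
  assumes "1 < q" "0 < R" "0 \<le> a" "a \<le> R"
  shows "R * Ent q (a / R) * ln (real q) = entr a + entr (R - a) - entr R"
proof -
  have "1 - a / R = (R - a) / R"
    using assms by (simp add: field_simps)
  then have "R * Ent q (a / R) * ln (real q) = R * entr (a / R) + R * entr ((R - a) / R)"
    using Ent_times_ln[of q "a / R"] assms by (simp add: mult.assoc distrib_left)
  also have "\<dots> = entr a + a * ln R + (entr (R - a) + (R - a) * ln R)"
    using assms by (simp add: mult_entr_divide)
  also have "\<dots> = entr a + entr (R - a) - entr R"
    by (simp add: entr_def algebra_simps)
  finally show ?thesis .
qed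

lemma entr_le_tangent:
  assumes "0 < a" "0 \<le> p"
  shows "entr p \<le> entr a + (- ln a - 1) * (p - a)"
proof (cases "p = 0")
  case True
  with assms show ?thesis by (simp add: entr_def algebra_simps)
next
  case False
  with assms have "p > 0" by simp
  have "p * ln (a / p) \<le> p * (a / p - 1)"
    using ln_le_minus_one[of "a / p"] \<open>p > 0\<close> assms by (intro mult_left_mono) auto
  then have "p * ln a - p * ln p \<le> a - p"
    using \<open>p > 0\<close> assms by (simp add: ln_div right_diff_distrib)
  then show ?thesis by (simp add: entr_def algebra_simps)
qed

text \<open>Gibbs' inequality for the two-point distribution \<open>(N/D, 1 - N/D)\<close>.\<close>

lemma entr_split_le:
  assumes "0 < N" "N \<le> D" "0 < \<alpha>" "\<alpha> \<le> 1" "\<alpha> = 1 \<Longrightarrow> N = D"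
  shows "entr N + entr (D - N) - entr D \<le> - N * ln \<alpha> - (D - N) * ln (1 - \<alpha>)"
proof (cases "\<alpha> = 1")
  case True
  with assms show ?thesis by simp
next
  case False
  with assms have "\<alpha> < 1" "0 < D" by auto
  have "entr N \<le> entr (\<alpha> * D) + (- ln (\<alpha> * D) - 1) * (N - \<alpha> * D)"
    using entr_le_tangent[of "\<alpha> * D" N] assms \<open>0 < D\<close> by simp
  moreover have "entr (D - N) \<le> entr ((1 - \<alpha>) * D) + (- ln ((1 - \<alpha>) * D) - 1) * ((D - N) - (1 - \<alpha>) * D)"
    using entr_le_tangent[of "(1 - \<alpha>) * D" "D - N"] assms \<open>\<alpha> < 1\<close> \<open>0 < D\<close> by simp
  moreover have "ln (\<alpha> * D) = ln \<alpha> + ln D" "ln ((1 - \<alpha>) * D) = ln (1 - \<alpha>) + ln D"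
    using assms \<open>\<alpha> < 1\<close> \<open>0 < D\<close> by (simp_all add: ln_mult)
  ultimately show ?thesis
    by (simp add: entr_def algebra_simps)
qed

lemma entr_split_eq:
  assumes "0 < N" "N \<le> D"
  shows "entr N + entr (D - N) - entr D = - N * ln (N / D) - (D - N) * ln (1 - N / D)"
proof (cases "N = D")
  case False
  with assms have "0 < D - N" "1 - N / D = (D - N) / D" by (auto simp: field_simps)
  with assms show ?thesis by (simp add: entr_def ln_div left_diff_distrib right_diff_distrib)
qed simp

section \<open>The objective multiplied by \<open>ln q\<close>\<close>

lemma Ent_chain_times_ln:
  fixes t :: "nat \<Rightarrow> real"
  assumes "1 < q" "1 \<le> m" and t_nonneg: "\<forall>l\<in>{1..m}. 0 \<le> t l" and "(\<Sum>l=1..m. t l) < 1"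
  shows "(Ent q (t m) + (\<Sum>l=1..m-1. (1 - (\<Sum>\<nu>=l+1..m. t \<nu>)) * Ent q (t l / (1 - (\<Sum>\<nu>=l+1..m. t \<nu>)))))
           * ln (real q)
         = (\<Sum>l=1..m. entr (t l)) + entr (1 - (\<Sum>l=1..m. t l))"
proof -
  define R where "R l = 1 - (\<Sum>\<nu>=l+1..m. t \<nu>)" for l
  have R_pos: "0 < R l" for l
  proof -
    have "(\<Sum>\<nu>=l+1..m. t \<nu>) \<le> (\<Sum>l=1..m. t l)"
      by (rule sum_mono2) (use t_nonneg in auto)
    with assms show ?thesis by (simp add: R_def)
  qed
  have R_diff: "R l - t l = R (l - 1)" if "1 \<le> l" "l \<le> m" for l
    using that by (simp add: R_def sum.atLeast_Suc_atMost)
  have "(\<Sum>l=1..m-1. R l * Ent q (t l / R l)) * ln (real q)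
        = (\<Sum>l=1..m-1. entr (t l) - (entr (R l) - entr (R (l - 1))))"
    unfolding sum_distrib_right
  proof (rule sum.cong)
    fix l assume "l \<in> {1..m-1}"
    then have "1 \<le> l" "l \<le> m" by auto
    then have "t l \<le> R l"
      using R_diff[of l] R_pos[of "l - 1"] by simp
    then show "R l * Ent q (t l / R l) * ln (real q) = entr (t l) - (entr (R l) - entr (R (l - 1)))"
      using mult_Ent_divide_times_ln[OF \<open>1 < q\<close> R_pos, of "t l" l] R_diff[OF \<open>1 \<le> l\<close> \<open>l \<le> m\<close>]
        t_nonneg \<open>1 \<le> l\<close> \<open>l \<le> m\<close> by simp
  qed simp
  also have "\<dots> = (\<Sum>l=1..m-1. entr (t l)) - (entr (R (m - 1)) - entr (R 0))"
    using sum_telescope''[of 0 "m - 1" "\<lambda>l. entr (R l)"] by (simp add: sum_subtractf)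
  finally have chain: "(\<Sum>l=1..m-1. R l * Ent q (t l / R l)) * ln (real q)
      = (\<Sum>l=1..m-1. entr (t l)) - (entr (1 - t m) - entr (1 - (\<Sum>l=1..m. t l)))"
    using \<open>1 \<le> m\<close> by (simp add: R_def)
  have "t m \<le> 1"
    using R_diff[of m] R_pos[of "m - 1"] R_pos[of m] \<open>1 \<le> m\<close> by (simp add: R_def)
  then have "Ent q (t m) * ln (real q) = entr (t m) + entr (1 - t m)"
    using Ent_times_ln[OF \<open>1 < q\<close>] t_nonneg \<open>1 \<le> m\<close> by simp
  moreover have "(\<Sum>l=1..m. entr (t l)) = (\<Sum>l=1..m-1. entr (t l)) + entr (t m)"
    using \<open>1 \<le> m\<close> by (cases m) (simp_all add: sum.cl_ivl_Suc)
  ultimately show ?thesis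
    using chain by (simp add: R_def distrib_right)
qed

definition S_nats :: "nat \<Rightarrow> real \<Rightarrow> real \<Rightarrow> real \<Rightarrow> (nat \<Rightarrow> real) \<Rightarrow> real" where
  "S_nats m s y x t =
     (let W = (\<Sum>l=1..m. real l * t l); N = y + x + W
      in (\<Sum>l=1..m. entr (t l)) + entr N + entr (1 - (\<Sum>l=1..m. t l) - N)
         + (entr N + entr (s - x) - entr (y + s + W)))"

lemma Sfun_times_ln_eq_S_nats:
  assumes "1 < q" "1 \<le> m" and t_nonneg: "\<forall>l\<in>{1..m}. 0 \<le> t l"
    and "0 < y" "0 \<le> x" "x \<le> \<sigma> / \<gamma>"
    and small: "y + x + (\<Sum>l=1..m. real (l + 1) * t l) < 1"
    and regime: "1 - 1 / real q \<le> (y + x + (\<Sum>l=1..m. real l * t l)) / (y + \<sigma> / \<gamma> + (\<Sum>l=1..m. real l * t l))"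
  shows "Sfun q \<gamma> m \<sigma> y x t * ln (real q) = S_nats m (\<sigma> / \<gamma>) y x t"
proof -
  define T where "T = (\<Sum>l=1..m. t l)"
  define W where "W = (\<Sum>l=1..m. real l * t l)"
  define N where "N = y + x + W"
  define D where "D = y + \<sigma> / \<gamma> + W"
  have "T + W = (\<Sum>l=1..m. real (l + 1) * t l)"
    by (simp add: T_def W_def sum.distrib[symmetric] algebra_simps)
  moreover have "0 \<le> W" "0 \<le> T"
    using t_nonneg by (auto simp: W_def T_def intro!: sum_nonneg)
  ultimately have "0 < N" "T + N < 1" "N \<le> D"
    using assms by (simp_all add: N_def D_def)
  have "Sfun q \<gamma> m \<sigma> y x t * ln (real q)
      = (Ent q (t m) + (\<Sum>l=1..m-1. (1 - (\<Sum>\<nu>=l+1..m. t \<nu>)) * Ent q (t l / (1 - (\<Sum>\<nu>=l+1..m. t \<nu>)))))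
          * ln (real q)
        + (1 - T) * Ent q (N / (1 - T)) * ln (real q) + D * Ent q (N / D) * ln (real q)"
    using regime by (simp add: Sfun_def Let_def T_def W_def N_def D_def distrib_right)
  also have "\<dots> = (\<Sum>l=1..m. entr (t l)) + entr (1 - T)
        + (entr N + entr (1 - T - N) - entr (1 - T)) + (entr N + entr (D - N) - entr D)"
    using Ent_chain_times_ln[OF \<open>1 < q\<close> \<open>1 \<le> m\<close> t_nonneg] mult_Ent_divide_times_ln[OF \<open>1 < q\<close>]
      \<open>0 < N\<close> \<open>T + N < 1\<close> \<open>N \<le> D\<close> \<open>0 \<le> T\<close> by (simp add: T_def)
  also have "\<dots> = S_nats m (\<sigma> / \<gamma>) y x t"
    by (simp add: S_nats_def Let_def T_def W_def N_def D_def)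
  finally show ?thesis .
qed

lemma ratio_ge_threshold:
  assumes "1 < q" "0 < y" "0 \<le> x" "x \<le> s" "s \<le> y / (real q - 1)" "0 \<le> W"
  shows "1 - 1 / real q \<le> (y + x + W) / (y + s + W)"
proof -
  have "real q * (s - x) \<le> real q * s"
    using assms by simp
  also have "\<dots> \<le> y + s"
    using assms by (simp add: field_simps)
  finally have "real q * (s - x) \<le> y + s + W"
    using assms by simp
  then have "(1 - 1 / real q) * (y + s + W) \<le> y + x + W"
    using assms by (simp add: field_simps)
  then show ?thesis
    using assms by (simp add: le_divide_eq)
qed

lemma S_nats_le_tangent:
  fixes m :: nat and s y x :: real and t t' :: "nat \<Rightarrow> real"
  defines "N' \<equiv> y + (\<Sum>l=1..m. real l * t' l)"
    and "D' \<equiv> y + s + (\<Sum>l=1..m. real l * t' l)"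
    and "M' \<equiv> 1 - y - (\<Sum>l=1..m. real (l + 1) * t' l)"
  assumes t_nonneg: "\<forall>l\<in>{1..m}. 0 \<le> t l"
    and t'_pos: "\<forall>l\<in>{1..m}. 0 < t' l \<or> t l = t' l"
    and "0 < y" "0 \<le> x" "x \<le> s"
    and M_pos: "0 < 1 - y - x - (\<Sum>l=1..m. real (l + 1) * t l)"
    and "0 < M'"
  shows "S_nats m s y x t \<le> S_nats m s y 0 t'
           + (\<Sum>l=1..m. (- ln (t' l) - 1) * (t l - t' l))
           - (2 * ln N' - ln D' + 1) * (x + (\<Sum>l=1..m. real l * (t l - t' l)))
           + (ln M' + 1) * (x + (\<Sum>l=1..m. real (l + 1) * (t l - t' l)))
           + x * (ln s - ln D')"
proof -
  define W where "W = (\<Sum>l=1..m. real l * t l)"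
  define N where "N = y + x + W"
  define M where "M = 1 - y - x - (\<Sum>l=1..m. real (l + 1) * t l)"
  define \<alpha> where "\<alpha> = N' / D'"
  have weight_split: "(\<Sum>l=1..m. real (l + 1) * f l) = (\<Sum>l=1..m. f l) + (\<Sum>l=1..m. real l * f l)"
    for f :: "nat \<Rightarrow> real"
    by (simp add: sum.distrib[symmetric] algebra_simps)
  have M_eq: "M = 1 - (\<Sum>l=1..m. t l) - N"
    using weight_split[of t] unfolding M_def N_def W_def by linarith
  have M'_eq: "M' = 1 - (\<Sum>l=1..m. t' l) - N'"
    using weight_split[of t'] unfolding M'_def N'_def by linarith
  have "0 \<le> W"
    using t_nonneg by (auto simp: W_def intro!: sum_nonneg)
  have "0 \<le> (\<Sum>l=1..m. real l * t' l)"
    using t_nonneg t'_pos by (intro sum_nonneg) (metis less_le mult_nonneg_nonneg of_nat_0_le_iff)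
  then have "0 < N'" "N' \<le> D'" "D' = N' + s"
    using assms by (simp_all add: N'_def D'_def)
  then have "0 < \<alpha>" "\<alpha> \<le> 1"
    by (simp_all add: \<alpha>_def)
  have ln_\<alpha>: "ln \<alpha> = ln N' - ln D'"
    using \<open>0 < N'\<close> \<open>N' \<le> D'\<close> by (simp add: \<alpha>_def ln_div)
  have x_ln_1_\<alpha>: "x * ln (1 - \<alpha>) = x * (ln s - ln D')"
  proof (cases "s = 0")
    case False
    with assms \<open>D' = N' + s\<close> \<open>0 < N'\<close> have "1 - \<alpha> = s / D'" "0 < s"
      by (auto simp: \<alpha>_def field_simps)
    with \<open>0 < N'\<close> \<open>N' \<le> D'\<close> show ?thesis by (simp add: ln_div)
  qed (use assms in simp)
  have N_diff: "N - N' = x + (\<Sum>l=1..m. real l * (t l - t' l))"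
    by (simp add: N_def N'_def W_def sum_subtractf right_diff_distrib)
  have M_diff: "M - M' = - (x + (\<Sum>l=1..m. real (l + 1) * (t l - t' l)))"
    by (simp add: M_def M'_def sum_subtractf right_diff_distrib)
  have "(\<Sum>l=1..m. entr (t l)) - (\<Sum>l=1..m. entr (t' l))
        \<le> (\<Sum>l=1..m. (- ln (t' l) - 1) * (t l - t' l))"
    unfolding sum_subtractf[symmetric]
    by (rule sum_mono) (use t_nonneg t'_pos entr_le_tangent in fastforce)
  moreover have "entr N \<le> entr N' + (- ln N' - 1) * (N - N')"
    using entr_le_tangent[of N' N] \<open>0 < N'\<close> \<open>0 \<le> W\<close> \<open>0 < y\<close> \<open>0 \<le> x\<close> by (simp add: N_def)
  moreover have "entr M \<le> entr M' + (- ln M' - 1) * (M - M')"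
    using entr_le_tangent[of M' M] \<open>0 < M'\<close> M_pos by (simp add: M_def)
  moreover have "entr N + entr (s - x) - entr (y + s + W) \<le> - N * ln \<alpha> - (s - x) * ln (1 - \<alpha>)"
  proof -
    have "entr N + entr ((y + s + W) - N) - entr (y + s + W)
          \<le> - N * ln \<alpha> - ((y + s + W) - N) * ln (1 - \<alpha>)"
    proof (rule entr_split_le)
      assume "\<alpha> = 1"
      with \<open>0 < N'\<close> \<open>D' = N' + s\<close> have "s = 0" by (simp add: \<alpha>_def)
      with \<open>0 \<le> x\<close> \<open>x \<le> s\<close> show "N = y + s + W" by (simp add: N_def)
    qed (use \<open>0 < \<alpha>\<close> \<open>\<alpha> \<le> 1\<close> \<open>0 \<le> W\<close> \<open>0 < y\<close> \<open>0 \<le> x\<close> \<open>x \<le> s\<close> in \<open>auto simp: N_def\<close>)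
    then show ?thesis by (simp add: N_def)
  qed
  moreover have "entr N' + entr s - entr D' = - N' * ln \<alpha> - s * ln (1 - \<alpha>)"
    using entr_split_eq[of N' D'] \<open>0 < N'\<close> \<open>N' \<le> D'\<close> \<open>D' = N' + s\<close> by (simp add: \<alpha>_def)
  moreover have "S_nats m s y x t = (\<Sum>l=1..m. entr (t l)) + entr N + entr M + (entr N + entr (s - x) - entr (y + s + W))"
    unfolding M_eq by (simp add: S_nats_def Let_def N_def W_def)
  moreover have "S_nats m s y 0 t' = (\<Sum>l=1..m. entr (t' l)) + entr N' + entr M' + (entr N' + entr s - entr D')"
    unfolding M'_eq by (simp add: S_nats_def Let_def N'_def D'_def)
  ultimately have "S_nats m s y x t - S_nats m s y 0 t'
      \<le> (\<Sum>l=1..m. (- ln (t' l) - 1) * (t l - t' l)) + (- ln N' - 1) * (N - N') + (- ln M' - 1) * (M - M')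
         - (N - N') * ln \<alpha> + x * ln (1 - \<alpha>)"
    by (simp add: algebra_simps)
  then show ?thesis
    unfolding N_diff M_diff ln_\<alpha> x_ln_1_\<alpha> by (simp add: algebra_simps)
qed

section \<open>The sequences \<open>tbar\<close> and \<open>t*\<close>\<close>

declare tstar.simps [simp del]

definition tail :: "nat \<Rightarrow> (nat \<Rightarrow> real) \<Rightarrow> nat \<Rightarrow> real" where
  "tail m xs j = (\<Sum>\<nu>=j..m. xs \<nu>)"

definition tstar_gap :: "nat \<Rightarrow> (nat \<Rightarrow> real) \<Rightarrow> real" where
  "tstar_gap m xs = 2 * (tbar m xs 1 - tstar m xs 1)"

lemma tail_Suc: "j \<le> m \<Longrightarrow> tail m xs j = xs j + tail m xs (Suc j)"
  by (simp add: tail_def sum.atLeast_Suc_atMost)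

lemma tail_beyond: "m < j \<Longrightarrow> tail m xs j = 0"
  by (simp add: tail_def)

lemma tbar_eq_tail: "tbar m xs l = 2 * xs l + tail m xs (Suc l)"
  by (simp add: tbar_def tail_def)

lemma tstar_gap_eq: "1 \<le> k \<Longrightarrow> real (k + 1) * (tbar m xs k - tstar m xs k) = tstar_gap m xs"
proof (induction k rule: nat_induct_at_least)
  case base
  show ?case by (simp add: tstar_gap_def)
next
  case (Suc k)
  then obtain j where "k = Suc j" by (cases k) auto
  then have "real (Suc k + 1) * (tbar m xs (Suc k) - tstar m xs (Suc k))
             = real (k + 1) * (tbar m xs k - tstar m xs k)"
    by (simp add: tstar.simps field_simps)
  with Suc.IH show ?case by simp
qed

lemma double_tstar1:
  "2 * tstar m xs 1 = 2 * (\<Sum>l=1..m. real (l + 1) * xs l) - (\<Sum>l=2..m. real (l + 1) * tbar m xs l)"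
  by (simp add: tstar.simps)

lemma sum_from_1_split:
  fixes f :: "nat \<Rightarrow> real"
  shows "1 \<le> m \<Longrightarrow> (\<Sum>l=1..m. f l) = f 1 + (\<Sum>l=2..m. f l)"
  by (simp add: sum.atLeast_Suc_atMost numeral_2_eq_2)

lemma tstar_gap_eq_sum:
  assumes "1 \<le> m"
  shows "tstar_gap m xs = (\<Sum>l=1..m. real (l + 1) * tail m xs (Suc l))"
proof -
  have "(\<Sum>l=1..m. real (l + 1) * tbar m xs l)
        = 2 * tbar m xs 1 + (\<Sum>l=2..m. real (l + 1) * tbar m xs l)"
    using sum_from_1_split[OF assms] by simp
  moreover have "(\<Sum>l=1..m. real (l + 1) * tail m xs (Suc l))
      = (\<Sum>l=1..m. real (l + 1) * tbar m xs l) - 2 * (\<Sum>l=1..m. real (l + 1) * xs l)"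
    by (simp add: tbar_eq_tail sum_distrib_left sum_subtractf[symmetric] algebra_simps)
  moreover note double_tstar1[of m xs]
  ultimately show ?thesis
    by (simp add: tstar_gap_def)
qed

locale nonneg_weights =
  fixes m :: nat and xs :: "nat \<Rightarrow> real"
  assumes m_pos: "1 \<le> m" and xs_nonneg: "\<forall>l\<in>{1..m}. 0 \<le> xs l"
begin

lemma tail_nonneg: "1 \<le> j \<Longrightarrow> 0 \<le> tail m xs j"
  unfolding tail_def using xs_nonneg by (intro sum_nonneg) auto

lemma tail_antimono: "1 \<le> i \<Longrightarrow> i \<le> j \<Longrightarrow> tail m xs j \<le> tail m xs i"
  unfolding tail_def by (rule sum_mono2) (use xs_nonneg in auto)

lemma tbar_nonneg: "1 \<le> l \<Longrightarrow> l \<le> m \<Longrightarrow> 0 \<le> tbar m xs l"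
  using tbar_eq_tail[of m xs l] tail_nonneg[of "Suc l"] xs_nonneg by auto

lemma tbar_le_double:
  assumes "1 \<le> i" "i < j" "j \<le> m"
  shows "tbar m xs j \<le> 2 * tbar m xs i"
proof -
  have "tbar m xs j = xs j + tail m xs j"
    using tbar_eq_tail[of m xs j] tail_Suc[of j m xs] assms by simp
  also have "\<dots> \<le> 2 * tail m xs (Suc i)"
    using tail_Suc[of j m xs] tail_nonneg[of "Suc j"] tail_antimono[of "Suc i" j] assms by simp
  also have "\<dots> \<le> 2 * tbar m xs i"
    using tbar_eq_tail[of m xs i] xs_nonneg assms by simp
  finally show ?thesis .
qed

lemma tstar_gap_nonneg: "0 \<le> tstar_gap m xs"
  unfolding tstar_gap_eq_sum[OF m_pos] using tail_nonneg by (intro sum_nonneg) auto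

lemma tstar_le_tbar:
  assumes "1 \<le> k"
  shows "tstar m xs k \<le> tbar m xs k"
proof -
  have "0 \<le> real (k + 1) * (tbar m xs k - tstar m xs k)"
    using tstar_gap_eq[OF assms] tstar_gap_nonneg by simp
  then show ?thesis
    by (simp add: zero_le_mult_iff)
qed

lemma ustar_nonneg: "0 \<le> ustar m xs"
proof -
  define A where "A = (\<Sum>l=1..m. real (l + 1) * xs l)"
  define B where "B = (\<Sum>l=2..m. real (l + 1) * tbar m xs l)"
  define L where "L = (\<Sum>l=2..m. real l * tbar m xs l)"
  define E where "E = (\<Sum>l=2..m. (real l - 1) * tbar m xs l)"
  have "2 * tstar m xs 1 = 2 * A - B"
    unfolding A_def B_def by (rule double_tstar1)
  moreover have "2 * L = B + E"
    by (simp add: L_def B_def E_def sum_distrib_left sum.distrib[symmetric] algebra_simps)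
  moreover have "0 \<le> A" "0 \<le> E"
    using xs_nonneg tbar_nonneg by (auto simp: A_def E_def intro!: sum_nonneg)
  ultimately show ?thesis
    unfolding ustar_def L_def[symmetric] by linarith
qed

lemma tstar1_le_ustar: "tstar m xs 1 \<le> ustar m xs"
proof -
  have "0 \<le> (\<Sum>l=2..m. real l * tbar m xs l)"
    using tbar_nonneg by (intro sum_nonneg mult_nonneg_nonneg) auto
  then show ?thesis by (simp add: ustar_def)
qed

lemma tbar_le_ustar:
  assumes "0 \<le> tstar m xs 1" "2 \<le> j" "j \<le> m"
  shows "tbar m xs j \<le> ustar m xs"
proof -
  have "tbar m xs j \<le> real j * tbar m xs j"
    using assms tbar_nonneg[of j] by (simp add: mult_le_cancel_right1)
  also have "\<dots> \<le> (\<Sum>l=2..m. real l * tbar m xs l)"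
    using assms tbar_nonneg by (intro member_le_sum) auto
  finally show ?thesis
    using assms by (simp add: ustar_def)
qed

end

section \<open>Consequences of condition C4\<close>

locale growth_condition = nonneg_weights +
  fixes D :: real
  assumes D_pos: "0 < D"
    and growth: "\<forall>l\<in>{1..m-1}. tbar m xs (l + 1) ^ (l + 1) * D \<le> tstar m xs l ^ (l + 2)"
begin

lemma growth_at: "1 \<le> k \<Longrightarrow> k + 1 \<le> m \<Longrightarrow> tbar m xs (k + 1) ^ (k + 1) * D \<le> tstar m xs k ^ (k + 2)"
  using growth by simp

lemma tstar_odd_nonneg:
  assumes "odd k" "1 \<le> k" "k + 1 \<le> m"
  shows "0 \<le> tstar m xs k"
proof -
  have "0 \<le> tbar m xs (k + 1) ^ (k + 1) * D"
    using D_pos tbar_nonneg[of "k + 1"] assms by simp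
  also have "\<dots> \<le> tstar m xs k ^ (k + 2)"
    using growth_at assms by simp
  finally show ?thesis
    using zero_le_odd_power[of "k + 2" "tstar m xs k"] assms by simp
qed

lemma tstar1_nonneg: "0 \<le> tstar m xs 1"
proof (cases "m = 1")
  case True
  then show ?thesis
    using xs_nonneg by (simp add: tstar.simps)
qed (use tstar_odd_nonneg[of 1] m_pos in simp)

end

locale bounded_growth_condition = growth_condition +
  assumes tstar1_le_D: "tstar m xs 1 \<le> D"
    and tbar_le_D: "\<forall>j\<in>{2..m}. tbar m xs j \<le> D"
begin

lemma tstar_le_D:
  assumes "1 \<le> j" "j \<le> m"
  shows "tstar m xs j \<le> D"
proof (cases "j = 1")
  case False
  with assms tbar_le_D have "tbar m xs j \<le> D" by auto
  with tstar_le_tbar[OF assms(1)] show ?thesis by linarith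
qed (use tstar1_le_D in simp)

lemma tstar_nonpos_imp:
  assumes "1 \<le> k" "k + 1 \<le> m" "0 < tbar m xs (k + 1)" "tstar m xs k \<le> 0"
  shows "even k" "tbar m xs (k + 1) \<le> - tstar m xs k"
proof -
  have growth_k: "tbar m xs (k + 1) ^ (k + 1) * D \<le> tstar m xs k ^ (k + 2)"
    using growth_at assms by simp
  have lhs_pos: "0 < tbar m xs (k + 1) ^ (k + 1) * D"
    using assms D_pos by simp
  have "0 < tstar m xs k ^ (k + 2)"
    using growth_k lhs_pos by linarith
  then show "even k"
    using zero_less_power_eq[of "tstar m xs k" "k + 2"] assms(4) by auto
  show "tbar m xs (k + 1) \<le> - tstar m xs k"
  proof (rule ccontr)
    assume "\<not> ?thesis"
    then have "tstar m xs k ^ (k + 2) < tbar m xs (k + 1) ^ (k + 2)"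
      using \<open>even k\<close> assms(4) power_strict_mono[of "- tstar m xs k" "tbar m xs (k + 1)" "k + 2"]
      by simp
    also have "\<dots> \<le> tbar m xs (k + 1) ^ (k + 1) * D"
      using tbar_le_D assms by (simp add: mult_left_mono)
    finally show False
      using growth_k by linarith
  qed
qed

lemma tbar_Suc_le_tstar:
  assumes "1 \<le> k" "k + 1 \<le> m" "0 < tstar m xs k"
  shows "tbar m xs (k + 1) \<le> tstar m xs k"
proof -
  have "tbar m xs (k + 1) ^ (k + 1) * D \<le> tstar m xs k ^ (k + 1) * tstar m xs k"
    using growth_at assms by (simp add: mult.commute)
  also have "\<dots> \<le> tstar m xs k ^ (k + 1) * D"
    using tstar_le_D[of k] assms by (intro mult_left_mono) auto
  finally have "tbar m xs (k + 1) ^ Suc k \<le> tstar m xs k ^ Suc k"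
    using D_pos by simp
  then show ?thesis
    using power_le_imp_le_base[of "tbar m xs (k + 1)" k "tstar m xs k"] assms by simp
qed

lemma tstar_gap_le:
  assumes "1 \<le> k" "k + 1 \<le> m" "0 < tstar m xs k"
  shows "tstar_gap m xs \<le> real (k + 1) * (tbar m xs k - tbar m xs (k + 1))"
  using tstar_gap_eq[of k m xs] tbar_Suc_le_tstar[OF assms] assms(1)
  by (metis diff_left_mono mult_left_mono of_nat_0_le_iff)

lemma tstar_odd_pos:
  assumes "odd k" "1 \<le> k" "k + 1 \<le> m" "0 < tbar m xs (k + 1)"
  shows "0 < tstar m xs k"
  using tstar_nonpos_imp(1)[of k] assms by fastforce

lemma tstar_2_pos:
  assumes "3 \<le> m" "0 < tbar m xs 3"
  shows "0 < tstar m xs 2"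
proof (rule ccontr)
  assume "\<not> ?thesis"
  then have "tbar m xs 3 \<le> - tstar m xs 2"
    using tstar_nonpos_imp(2)[of 2] assms by simp
  then have gap: "3 * (tbar m xs 2 + tbar m xs 3) \<le> tstar_gap m xs"
    using tstar_gap_eq[of 2 m xs] by simp
  show False
  proof (cases "m = 3")
    case True
    have "tstar_gap m xs = 2 * tail m xs 2 + 3 * tail m xs 3 + 4 * tail m xs 4"
      using tstar_gap_eq_sum[OF m_pos] True by (simp add: numeral_eq_Suc)
    moreover have "tail m xs 4 = 0" "tail m xs 3 = xs 3" "tail m xs 2 = xs 2 + xs 3"
      using tail_Suc[of _ m xs] tail_beyond[of m 4 xs] True by (simp_all add: numeral_eq_Suc)
    moreover have "tbar m xs 2 = 2 * xs 2 + xs 3" "tbar m xs 3 = 2 * xs 3"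
      using tbar_eq_tail[of m xs] calculation by (simp_all add: numeral_eq_Suc)
    moreover have "0 \<le> xs 2"
      using xs_nonneg True by simp
    ultimately show False
      using gap assms by simp
  next
    case False
    have "tbar m xs 3 \<le> 2 * tbar m xs 2"
      using tbar_le_double[of 2 3] assms by simp
    then have "4 * tstar m xs 3 < 0"
      using tstar_gap_eq[of 3 m xs] gap assms by simp
    moreover have "0 \<le> tstar m xs 3"
      using tstar_odd_nonneg[of 3] False assms by simp
    ultimately show False by simp
  qed
qed

lemma tstar_gap_ge_tails: "2 * tail m xs 2 + 3 * tail m xs 3 \<le> tstar_gap m xs"
proof (cases "m = 1")
  case True
  then show ?thesis
    using tstar_gap_nonneg tail_beyond[of m 2 xs] tail_beyond[of m 3 xs] by simp
next
  case False
  have "(\<Sum>l\<in>{1, 2}. real (l + 1) * tail m xs (Suc l)) \<le> (\<Sum>l=1..m. real (l + 1) * tail m xs (Suc l))"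
    using False m_pos tail_nonneg by (intro sum_mono2) auto
  then show ?thesis
    by (simp add: tstar_gap_eq_sum[OF m_pos] numeral_eq_Suc)
qed

lemma tstar_gap_nonpos:
  assumes "4 \<le> m" "0 < tstar m xs 2" "0 < tstar m xs 3"
  shows "tstar_gap m xs \<le> 0"
proof -
  have gap2: "tstar_gap m xs \<le> 3 * (tbar m xs 2 - tbar m xs 3)"
    and gap3: "tstar_gap m xs \<le> 4 * (tbar m xs 3 - tbar m xs 4)"
    using tstar_gap_le[of 2] tstar_gap_le[of 3] assms by simp_all
  have tails: "tail m xs 2 = xs 2 + tail m xs 3" "tail m xs 3 = xs 3 + tail m xs 4"
    "tail m xs 4 = xs 4 + tail m xs 5"
    using tail_Suc[of _ m xs] assms by (simp_all add: numeral_eq_Suc)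
  have tbars: "tbar m xs 2 = 2 * xs 2 + tail m xs 3" "tbar m xs 3 = 2 * xs 3 + tail m xs 4"
    "tbar m xs 4 = 2 * xs 4 + tail m xs 5"
    using tbar_eq_tail[of m xs] by (simp_all add: numeral_eq_Suc)
  have "0 \<le> xs 4" "0 \<le> tail m xs 5"
    using xs_nonneg tail_nonneg[of 5] assms by simp_all
  have "tstar_gap m xs \<le> 6 * xs 2 - 3 * xs 3"
    using gap2 by (simp add: tails tbars algebra_simps)
  moreover have "tstar_gap m xs \<le> 8 * xs 3"
    using gap3 \<open>0 \<le> xs 4\<close> by (simp add: tails tbars algebra_simps)
  moreover have "2 * xs 2 + 5 * xs 3 \<le> tstar_gap m xs"
    using tstar_gap_ge_tails \<open>0 \<le> xs 4\<close> \<open>0 \<le> tail m xs 5\<close> by (simp add: tails algebra_simps)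
  ultimately show ?thesis
    by linarith
qed

lemma tstar_pos:
  assumes "1 \<le> k" "k + 1 \<le> m" "0 < tbar m xs (k + 1)"
  shows "0 < tstar m xs k"
proof (rule ccontr)
  assume nonpos: "\<not> 0 < tstar m xs k"
  then have "even k"
    using tstar_nonpos_imp(1) assms by simp
  show False
  proof (cases "k = 2")
    case True
    with tstar_2_pos assms nonpos show False by simp
  next
    case False
    with \<open>even k\<close> assms have "4 \<le> k" by presburger
    have "tbar m xs (k + 1) \<le> 2 * tbar m xs k"
      using tbar_le_double[of k "k + 1"] assms by simp
    with assms nonpos have "0 < real (k + 1) * (tbar m xs k - tstar m xs k)"
      by (intro mult_pos_pos) auto
    then have "0 < tstar_gap m xs"
      using tstar_gap_eq[OF assms(1)] by simp
    have "tbar m xs (k + 1) \<le> 2 * tbar m xs 3" "tbar m xs (k + 1) \<le> 2 * tbar m xs 4"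
      using tbar_le_double[of 3 "k + 1"] tbar_le_double[of 4 "k + 1"] \<open>4 \<le> k\<close> assms by simp_all
    then have "0 < tstar m xs 2" "0 < tstar m xs 3"
      using tstar_2_pos tstar_odd_pos[of 3] \<open>4 \<le> k\<close> assms by simp_all
    with tstar_gap_nonpos \<open>4 \<le> k\<close> assms have "tstar_gap m xs \<le> 0"
      by simp
    with \<open>0 < tstar_gap m xs\<close> show False
      by simp
  qed
qed

lemma tbar_eq_0_if_tstar1_eq_0:
  assumes "tstar m xs 1 = 0" "1 \<le> l" "l \<le> m"
  shows "tbar m xs l = 0"
proof -
  have "tail m xs 2 = 0"
  proof (cases "m = 1")
    case False
    with tstar_pos[of 1] assms have "\<not> 0 < tbar m xs (1 + 1)"
      by auto
    with tbar_nonneg[of 2] False m_pos have "tbar m xs 2 = 0"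
      by (simp add: numeral_2_eq_2)
    moreover have "tail m xs 2 = xs 2 + tail m xs 3"
      using tail_Suc[of 2 m xs] False m_pos by (simp add: numeral_eq_Suc)
    moreover have "0 \<le> xs 2" "0 \<le> tail m xs 3"
      using xs_nonneg tail_nonneg[of 3] False m_pos by auto
    ultimately show ?thesis
      using tbar_eq_tail[of m xs 2] by (simp add: numeral_eq_Suc)
  qed (simp add: tail_beyond)
  then have "tail m xs (Suc j) = 0" if "1 \<le> j" for j
    using tail_antimono[of 2 "Suc j"] tail_nonneg[of "Suc j"] that by simp
  then have "tstar_gap m xs = 0"
    by (simp add: tstar_gap_eq_sum[OF m_pos])
  then have "tbar m xs 1 = 0"
    using assms by (simp add: tstar_gap_def)
  then show ?thesis
    using tbar_le_double[of 1 l] tbar_nonneg[of l] assms by (cases "l = 1") auto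
qed

lemma ln_tbar_Suc_le:
  assumes "1 \<le> n" "n + 1 \<le> m" "0 < tbar m xs (n + 1)"
  shows "real (n + 1) * ln (tbar m xs (n + 1)) + ln D \<le> real (n + 2) * ln (tstar m xs n)"
proof -
  have "0 < tstar m xs n"
    using tstar_pos assms by simp
  have "ln (tbar m xs (n + 1) ^ (n + 1) * D) \<le> ln (tstar m xs n ^ (n + 2))"
    using growth_at[of n] assms D_pos \<open>0 < tstar m xs n\<close> by simp
  then show ?thesis
    using assms D_pos \<open>0 < tstar m xs n\<close> by (simp add: ln_mult ln_realpow algebra_simps)
qed

lemma ln_tbar_le_ln_tstar1:
  assumes "2 \<le> l" "l \<le> m" "0 < tbar m xs l"
  shows "2 * ln (tbar m xs l) + real (l - 1) * ln D \<le> real (l + 1) * ln (tstar m xs 1)"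
  using assms
proof (induction l rule: nat_induct_at_least)
  case base
  then show ?case
    using ln_tbar_Suc_le[of 1] by (simp add: numeral_2_eq_2)
next
  case (Suc n)
  define a where "a = ln (tbar m xs n)"
  define a' where "a' = ln (tbar m xs (Suc n))"
  define b where "b = ln (tstar m xs 1)"
  define d where "d = ln D"
  have "0 < tbar m xs n"
    using tbar_le_double[of n "Suc n"] Suc by simp
  then have IH: "2 * a + (real n - 1) * d \<le> (real n + 1) * b"
    using Suc by (simp add: a_def b_def d_def of_nat_diff ac_simps)
  have "0 < tstar m xs n"
    using tstar_pos[of n] Suc by simp
  then have "ln (tstar m xs n) \<le> a"
    using tstar_le_tbar[of n] Suc by (simp add: a_def)
  then have "(real n + 2) * ln (tstar m xs n) \<le> (real n + 2) * a"
    by (rule mult_left_mono) simp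
  moreover have "(real n + 1) * a' + d \<le> (real n + 2) * ln (tstar m xs n)"
    using ln_tbar_Suc_le[of n] Suc by (simp add: a'_def d_def add.commute)
  ultimately have step: "(real n + 1) * a' + d \<le> (real n + 2) * a"
    by linarith
  have "(real n + 1) * (2 * a' + real n * d) = 2 * ((real n + 1) * a' + d) + (real n + 2) * ((real n - 1) * d)"
    by (simp add: algebra_simps)
  also have "\<dots> \<le> 2 * ((real n + 2) * a) + (real n + 2) * ((real n - 1) * d)"
    using step by simp
  also have "\<dots> = (real n + 2) * (2 * a + (real n - 1) * d)"
    by (simp add: algebra_simps)
  also have "\<dots> \<le> (real n + 2) * ((real n + 1) * b)"
    using IH by (intro mult_left_mono) auto
  also have "\<dots> = (real n + 1) * ((real n + 2) * b)"
    by (simp add: algebra_simps)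
  finally have "2 * a' + real n * d \<le> (real n + 2) * b"
    by (rule mult_left_le_imp_le) simp
  then show ?case
    by (simp add: a'_def b_def d_def algebra_simps)
qed

end

section \<open>Optimality of the candidate point\<close>

definition t_opt :: "nat \<Rightarrow> (nat \<Rightarrow> real) \<Rightarrow> nat \<Rightarrow> real" where
  "t_opt m xs l = (if l = 1 then tstar m xs 1 else tbar m xs l)"

lemma weighted_sum_t_opt:
  assumes "1 \<le> m"
  shows "(\<Sum>l=1..m. real (l + 1) * t_opt m xs l) = 2 * (\<Sum>l=1..m. real (l + 1) * xs l)"
proof -
  have "(\<Sum>l=2..m. real (l + 1) * t_opt m xs l) = (\<Sum>l=2..m. real (l + 1) * tbar m xs l)"
    by (intro sum.cong) (auto simp: t_opt_def)
  then have "(\<Sum>l=1..m. real (l + 1) * t_opt m xs l)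
             = 2 * tstar m xs 1 + (\<Sum>l=2..m. real (l + 1) * tbar m xs l)"
    using sum_from_1_split[OF assms, of "\<lambda>l. real (l + 1) * t_opt m xs l"] by (simp add: t_opt_def)
  then show ?thesis
    using double_tstar1[of m xs] by linarith
qed

lemma index_sum_t_opt:
  assumes "1 \<le> m"
  shows "(\<Sum>l=1..m. real l * t_opt m xs l) = ustar m xs"
proof -
  have "(\<Sum>l=2..m. real l * t_opt m xs l) = (\<Sum>l=2..m. real l * tbar m xs l)"
    by (intro sum.cong) (auto simp: t_opt_def)
  then show ?thesis
    using sum_from_1_split[OF assms, of "\<lambda>l. real l * t_opt m xs l"] by (simp add: t_opt_def ustar_def)
qed

lemma (in growth_condition) t_opt_bounds:
  assumes "1 \<le> l" "l \<le> m"
  shows "0 \<le> t_opt m xs l" "t_opt m xs l \<le> tbar m xs l"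
  using assms tstar1_nonneg tstar_le_tbar[of 1] tbar_nonneg[of l] by (auto simp: t_opt_def)

lemma (in bounded_growth_condition) t_opt_pos_or_tbar_eq_0:
  assumes "1 \<le> l" "l \<le> m"
  shows "0 < t_opt m xs l \<or> tbar m xs l = 0"
proof (cases "l = 1")
  case True
  then show ?thesis
    using tstar1_nonneg tbar_eq_0_if_tstar1_eq_0[of 1] m_pos by (auto simp: t_opt_def less_le)
next
  case False
  then show ?thesis
    using tbar_nonneg[of l] assms by (auto simp: t_opt_def less_le)
qed

locale maximizer_setting = nonneg_weights m xs for m xs +
  fixes q :: nat and \<gamma> \<sigma> y :: real
  assumes q_gt_1: "1 < q"
    and ratio_nonneg: "0 \<le> \<sigma> / \<gamma>"
    and y_pos: "0 < y"
    and small: "y + 2 * (\<Sum>l=1..m. real (l + 1) * xs l) + \<sigma> / \<gamma> < 1"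
    and C1: "\<sigma> / \<gamma> \<le> y / (real q - 1)"
    and C2_1: "tbar m xs 1 * (y + \<sigma> / \<gamma> + ustar m xs) ^ 2
               < (1 - y - \<sigma> / \<gamma> - 2 * (\<Sum>\<nu>=1..m. real (\<nu> + 1) * xs \<nu>)) ^ 2 * (y + \<sigma> / \<gamma>)"
    and C3: "\<sigma> / \<gamma> * (1 - y) < y ^ 2"
    and C4: "\<forall>l\<in>{1..m-1}. (tbar m xs (l + 1)) ^ (l + 1) * (y + \<sigma> / \<gamma> + ustar m xs)
               \<le> (tstar m xs l) ^ (l + 2)"
begin

definition "D_opt = y + \<sigma> / \<gamma> + ustar m xs"
definition "N_opt = y + ustar m xs"
definition "M_opt = 1 - y - 2 * (\<Sum>l=1..m. real (l + 1) * xs l)"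

sublocale growth_condition m xs D_opt
  using ustar_nonneg ratio_nonneg y_pos C4 by unfold_locales (auto simp: D_opt_def)

sublocale bounded_growth_condition m xs D_opt
proof unfold_locales
  have "0 \<le> y + \<sigma> / \<gamma>"
    using ratio_nonneg y_pos by simp
  then show "tstar m xs 1 \<le> D_opt" "\<forall>j\<in>{2..m}. tbar m xs j \<le> D_opt"
    using tstar1_le_ustar tbar_le_ustar[OF tstar1_nonneg] by (force simp: D_opt_def)+
qed

lemma N_opt_pos: "0 < N_opt"
  using ustar_nonneg y_pos by (simp add: N_opt_def)

lemma N_opt_le_D_opt: "N_opt \<le> D_opt"
  using ratio_nonneg by (simp add: N_opt_def D_opt_def)

lemma M_opt_gt_ratio: "\<sigma> / \<gamma> < M_opt"
  using small by (simp add: M_opt_def)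

lemma feasibleD:
  assumes "feasible \<gamma> m \<sigma> xs x t"
  shows "0 \<le> x" "x \<le> \<sigma> / \<gamma>" "\<forall>l\<in>{1..m}. 0 \<le> t l \<and> t l \<le> tbar m xs l"
    and "(\<Sum>l=1..m. real (l + 1) * t l) \<le> 2 * (\<Sum>l=1..m. real (l + 1) * xs l)"
  using assms by (auto simp: feasible_def tbar_def)

lemma feasible_t_opt: "feasible \<gamma> m \<sigma> xs 0 (t_opt m xs)"
  using t_opt_bounds ratio_nonneg weighted_sum_t_opt[OF m_pos] by (auto simp: feasible_def tbar_def)

lemma Sfun_times_ln_eq:
  assumes "feasible \<gamma> m \<sigma> xs x t"
  shows "Sfun q \<gamma> m \<sigma> y x t * ln (real q) = S_nats m (\<sigma> / \<gamma>) y x t"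
proof (rule Sfun_times_ln_eq_S_nats[OF q_gt_1 m_pos])
  show "\<forall>l\<in>{1..m}. 0 \<le> t l"
    using feasibleD(3)[OF assms] by simp
  then have "0 \<le> (\<Sum>l=1..m. real l * t l)"
    by (intro sum_nonneg) auto
  then show "1 - 1 / real q
      \<le> (y + x + (\<Sum>l=1..m. real l * t l)) / (y + \<sigma> / \<gamma> + (\<Sum>l=1..m. real l * t l))"
    using ratio_ge_threshold[OF q_gt_1 y_pos] feasibleD[OF assms] C1 by simp
  show "y + x + (\<Sum>l=1..m. real (l + 1) * t l) < 1"
    using feasibleD[OF assms] small by simp
qed (use y_pos feasibleD[OF assms] in auto)

text \<open>\<open>grad l\<close> is the partial derivative of \<open>S_nats\<close> in \<open>t\<^sub>l\<close> at the candidate point.\<close>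

definition grad :: "nat \<Rightarrow> real" where
  "grad l = - ln (t_opt m xs l) - 1 - real l * (2 * ln N_opt - ln D_opt + 1) + real (l + 1) * (ln M_opt + 1)"

lemma grad_1_nonneg:
  assumes "0 < tstar m xs 1"
  shows "0 \<le> grad 1"
proof -
  have "tstar m xs 1 * N_opt ^ 2 \<le> tbar m xs 1 * D_opt ^ 2"
    using tstar_le_tbar[of 1] tstar1_nonneg N_opt_pos N_opt_le_D_opt
    by (intro mult_mono power_mono) auto
  also have "\<dots> < (M_opt - \<sigma> / \<gamma>) ^ 2 * (y + \<sigma> / \<gamma>)"
    using C2_1 by (simp add: D_opt_def M_opt_def algebra_simps)
  also have "\<dots> \<le> M_opt ^ 2 * D_opt"
    using M_opt_gt_ratio ratio_nonneg ustar_nonneg y_pos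
    by (intro mult_mono power_mono) (auto simp: D_opt_def)
  finally have "tstar m xs 1 * N_opt ^ 2 < M_opt ^ 2 * D_opt" .
  moreover have "0 < tstar m xs 1 * N_opt ^ 2"
    using assms N_opt_pos by simp
  ultimately have "ln (tstar m xs 1 * N_opt ^ 2) < ln (M_opt ^ 2 * D_opt)"
    by (metis ln_less_cancel_iff order.strict_trans)
  then show ?thesis
    using assms N_opt_pos M_opt_gt_ratio ratio_nonneg D_pos
    by (simp add: grad_def t_opt_def ln_mult ln_realpow)
qed

lemma grad_ge:
  assumes "0 < tstar m xs 1" "2 \<le> l" "l \<le> m" "0 < tbar m xs l"
  shows "real (l + 1) * grad 1 \<le> 2 * grad l"
proof -
  have "2 * ln N_opt - ln D_opt \<le> ln D_opt"
    using N_opt_pos N_opt_le_D_opt by simp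
  then have "real (l - 1) * (2 * ln N_opt - ln D_opt) \<le> real (l - 1) * ln D_opt"
    by (intro mult_left_mono) auto
  moreover have "2 * ln (tbar m xs l) + real (l - 1) * ln D_opt \<le> real (l + 1) * ln (tstar m xs 1)"
    using ln_tbar_le_ln_tstar1 assms by simp
  moreover have "2 * grad l - real (l + 1) * grad 1
      = real (l + 1) * ln (tstar m xs 1) - 2 * ln (tbar m xs l) - real (l - 1) * (2 * ln N_opt - ln D_opt)"
    using assms by (simp add: grad_def t_opt_def of_nat_diff algebra_simps)
  ultimately show ?thesis
    by linarith
qed

lemma sum_grad_nonpos:
  assumes "feasible \<gamma> m \<sigma> xs x t"
  shows "(\<Sum>l=1..m. (t l - t_opt m xs l) * grad l) \<le> 0"
proof -
  have t_bounds: "0 \<le> t l" "t l \<le> tbar m xs l" if "l \<in> {1..m}" for l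
    using feasibleD(3)[OF assms] that by auto
  have no_slack: "t l - t_opt m xs l = 0" if "l \<in> {1..m}" "tbar m xs l = 0" for l
    using t_bounds[OF that(1)] t_opt_bounds[of l] that by auto
  show ?thesis
  proof (cases "tstar m xs 1 = 0")
    case True
    then show ?thesis
      using no_slack tbar_eq_0_if_tstar1_eq_0 by (simp add: sum.neutral)
  next
    case False
    then have "0 < tstar m xs 1"
      using tstar1_nonneg by simp
    define \<mu> where "\<mu> = grad 1 / 2" \<comment> \<open>multiplier of the budget constraint\<close>
    have "(t l - t_opt m xs l) * grad l \<le> \<mu> * (real (l + 1) * (t l - t_opt m xs l))"
      if l: "l \<in> {1..m}" for l
    proof (cases "l = 1 \<or> tbar m xs l = 0")
      case True
      then show ?thesis
        using no_slack[OF l] by (auto simp: \<mu>_def algebra_simps)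
    next
      case False
      with l tbar_nonneg[of l] have "2 \<le> l" "0 < tbar m xs l"
        by auto
      then have "real (l + 1) * grad 1 \<le> 2 * grad l"
        using grad_ge[OF \<open>0 < tstar m xs 1\<close>] l by simp
      moreover have "\<mu> * real (l + 1) = real (l + 1) * grad 1 / 2"
        by (simp add: \<mu>_def)
      ultimately have "\<mu> * real (l + 1) \<le> grad l"
        by linarith
      moreover have "t l - t_opt m xs l \<le> 0"
        using t_bounds[OF l] \<open>2 \<le> l\<close> by (simp add: t_opt_def)
      ultimately show ?thesis
        by (metis mult.assoc mult.commute mult_left_mono_neg)
    qed
    then have "(\<Sum>l=1..m. (t l - t_opt m xs l) * grad l)
               \<le> \<mu> * (\<Sum>l=1..m. real (l + 1) * (t l - t_opt m xs l))"
      unfolding sum_distrib_left by (rule sum_mono)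
    also have "\<dots> \<le> 0"
    proof (rule mult_nonneg_nonpos)
      show "0 \<le> \<mu>"
        using grad_1_nonneg[OF \<open>0 < tstar m xs 1\<close>] by (simp add: \<mu>_def)
      show "(\<Sum>l=1..m. real (l + 1) * (t l - t_opt m xs l)) \<le> 0"
        using feasibleD(4)[OF assms] weighted_sum_t_opt[OF m_pos]
        by (simp add: right_diff_distrib sum_subtractf)
    qed
    finally show ?thesis .
  qed
qed

lemma x_grad_nonpos:
  assumes "0 \<le> x" "x \<le> \<sigma> / \<gamma>"
  shows "x * (ln M_opt + ln (\<sigma> / \<gamma>) - 2 * ln N_opt) \<le> 0"
proof (cases "\<sigma> / \<gamma> = 0")
  case False
  with ratio_nonneg have "0 < \<sigma> / \<gamma>"
    by (metis order_le_neq_trans)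
  have "M_opt * (\<sigma> / \<gamma>) \<le> (1 - y) * (\<sigma> / \<gamma>)"
    using xs_nonneg ratio_nonneg by (intro mult_right_mono) (auto simp: M_opt_def intro!: sum_nonneg)
  also have "\<dots> < y ^ 2"
    using C3 by (simp add: mult.commute)
  also have "\<dots> \<le> N_opt ^ 2"
    using y_pos ustar_nonneg by (intro power_mono) (auto simp: N_opt_def)
  finally have "M_opt * (\<sigma> / \<gamma>) < N_opt ^ 2" .
  moreover have "0 < M_opt * (\<sigma> / \<gamma>)"
    using M_opt_gt_ratio \<open>0 < \<sigma> / \<gamma>\<close> by (intro mult_pos_pos) auto
  ultimately have "ln (M_opt * (\<sigma> / \<gamma>)) < ln (N_opt ^ 2)"
    by (metis ln_less_cancel_iff N_opt_pos zero_less_power)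
  moreover have "ln (M_opt * (\<sigma> / \<gamma>)) = ln M_opt + ln (\<sigma> / \<gamma>)"
    using M_opt_gt_ratio \<open>0 < \<sigma> / \<gamma>\<close> by (intro ln_mult_pos) auto
  moreover have "ln (N_opt ^ 2) = 2 * ln N_opt"
    using N_opt_pos by (simp add: ln_realpow)
  ultimately have "ln M_opt + ln (\<sigma> / \<gamma>) - 2 * ln N_opt < 0"
    by linarith
  with assms show ?thesis
    by (simp add: mult_nonneg_nonpos)
next
  case True
  with assms have "x = 0"
    by linarith
  then show ?thesis
    by simp
qed

lemma S_nats_le_t_opt:
  assumes "feasible \<gamma> m \<sigma> xs x t"
  shows "S_nats m (\<sigma> / \<gamma>) y x t \<le> S_nats m (\<sigma> / \<gamma>) y 0 (t_opt m xs)"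
proof -
  let ?\<delta> = "\<lambda>l. t l - t_opt m xs l"
  note feas = feasibleD[OF assms]
  have t_nonneg: "\<forall>l\<in>{1..m}. 0 \<le> t l"
    using feas(3) by simp
  have t_opt_pos: "\<forall>l\<in>{1..m}. 0 < t_opt m xs l \<or> t l = t_opt m xs l"
    using t_opt_pos_or_tbar_eq_0 t_opt_bounds feas(3) by force
  have M_pos: "0 < 1 - y - x - (\<Sum>l=1..m. real (l + 1) * t l)"
    using feas small by simp
  have M_opt_pos: "0 < 1 - y - (\<Sum>l=1..m. real (l + 1) * t_opt m xs l)"
    unfolding weighted_sum_t_opt[OF m_pos] using M_opt_gt_ratio ratio_nonneg by (simp add: M_opt_def)
  have rearrange: "(\<Sum>l=1..m. a l * ?\<delta> l) - X * (x + (\<Sum>l=1..m. real l * ?\<delta> l))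
      + Y * (x + (\<Sum>l=1..m. real (l + 1) * ?\<delta> l)) + x * Z
      = (\<Sum>l=1..m. ?\<delta> l * (a l - real l * X + real (l + 1) * Y)) + x * (Y - X + Z)"
    for a :: "nat \<Rightarrow> real" and X Y Z
    by (simp add: sum_distrib_left sum_subtractf sum.distrib algebra_simps)
  have "S_nats m (\<sigma> / \<gamma>) y x t \<le> S_nats m (\<sigma> / \<gamma>) y 0 (t_opt m xs)
      + (\<Sum>l=1..m. (- ln (t_opt m xs l) - 1) * ?\<delta> l)
      - (2 * ln N_opt - ln D_opt + 1) * (x + (\<Sum>l=1..m. real l * ?\<delta> l))
      + (ln M_opt + 1) * (x + (\<Sum>l=1..m. real (l + 1) * ?\<delta> l))
      + x * (ln (\<sigma> / \<gamma>) - ln D_opt)"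
    using S_nats_le_tangent[OF t_nonneg t_opt_pos y_pos feas(1,2) M_pos M_opt_pos]
    unfolding index_sum_t_opt[OF m_pos] weighted_sum_t_opt[OF m_pos]
      N_opt_def[symmetric] D_opt_def[symmetric] M_opt_def[symmetric]
    by (simp add: add.assoc)
  also have "\<dots> = S_nats m (\<sigma> / \<gamma>) y 0 (t_opt m xs) + (\<Sum>l=1..m. ?\<delta> l * grad l)
      + x * (ln M_opt + ln (\<sigma> / \<gamma>) - 2 * ln N_opt)"
    using rearrange[of "\<lambda>l. - ln (t_opt m xs l) - 1" "2 * ln N_opt - ln D_opt + 1" "ln M_opt + 1"
        "ln (\<sigma> / \<gamma>) - ln D_opt"]
    by (simp add: grad_def add.assoc algebra_simps)
  also have "\<dots> \<le> S_nats m (\<sigma> / \<gamma>) y 0 (t_opt m xs)"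
    using sum_grad_nonpos[OF assms] x_grad_nonpos[OF feas(1,2)] by linarith
  finally show ?thesis .
qed

lemma Sfun_le_t_opt:
  assumes "feasible \<gamma> m \<sigma> xs x t"
  shows "Sfun q \<gamma> m \<sigma> y x t \<le> Sfun q \<gamma> m \<sigma> y 0 (t_opt m xs)"
proof -
  have "Sfun q \<gamma> m \<sigma> y x t * ln (real q) \<le> Sfun q \<gamma> m \<sigma> y 0 (t_opt m xs) * ln (real q)"
    using S_nats_le_t_opt[OF assms] Sfun_times_ln_eq[OF assms] Sfun_times_ln_eq[OF feasible_t_opt]
    by simp
  moreover have "0 < ln (real q)"
    using q_gt_1 by simp
  ultimately show ?thesis
    by simp
qed

lemma Ifun_eq_Sfun_t_opt: "Ifun q \<gamma> m y xs \<sigma> = Sfun q \<gamma> m \<sigma> y 0 (t_opt m xs)"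
  unfolding Ifun_def by (rule cSup_eq_maximum) (use feasible_t_opt Sfun_le_t_opt in auto)

end

theorem proposition5p10:
  fixes q :: nat and \<gamma> \<sigma> y :: real and m :: nat and xs :: "nat \<Rightarrow> real"
  assumes q_pp: "\<exists>p k. prime p \<and> k > 0 \<and> q = p ^ k"
    and \<gamma>_pos: "\<gamma> > 0"
    and m_pos: "m \<ge> 1"
    and y_pos: "y > 0"
    and xs_nonneg: "\<forall>l\<in>{1..m}. xs l \<ge> 0"
    and \<sigma>_nonneg: "\<sigma> \<ge> 0"
    and small: "y + 2 * (\<Sum>l=1..m. real (l + 1) * xs l) + \<sigma> / \<gamma> < 1"
    and C1: "\<sigma> / \<gamma> \<le> y / (real q - 1)"
    and C2: "\<forall>l\<in>{1..m}. tbar m xs l * (y + \<sigma> / \<gamma> + ustar m xs) ^ (2 * l)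
               < (1 - y - \<sigma> / \<gamma> - 2 * (\<Sum>\<nu>=1..m. real (\<nu> + 1) * xs \<nu>)) ^ (l + 1)
                 * (y + \<sigma> / \<gamma>) ^ l"
    and C3: "\<sigma> / \<gamma> * (1 - y) < y ^ 2"
    and C4: "\<forall>l\<in>{1..m-1}. (tbar m xs (l + 1)) ^ (l + 1) * (y + \<sigma> / \<gamma> + ustar m xs)
               \<le> (tstar m xs l) ^ (l + 2)"
  shows "Ifun q \<gamma> m y xs \<sigma> =
           Sfun q \<gamma> m \<sigma> y 0 (\<lambda>l. if l = 1 then tstar m xs 1 else tbar m xs l)"
proof -
  obtain p k where "prime p" "0 < k" "q = p ^ k"
    using q_pp by blast
  then have "1 < q"
    using prime_gt_1_nat one_less_power by blast
  moreover have "0 \<le> \<sigma> / \<gamma>"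
    using \<sigma>_nonneg \<gamma>_pos by simp
  moreover have "tbar m xs 1 * (y + \<sigma> / \<gamma> + ustar m xs) ^ 2
      < (1 - y - \<sigma> / \<gamma> - 2 * (\<Sum>\<nu>=1..m. real (\<nu> + 1) * xs \<nu>)) ^ 2 * (y + \<sigma> / \<gamma>)"
    using bspec[OF C2, of 1] m_pos by (simp add: power2_eq_square)
  ultimately interpret maximizer_setting m xs q \<gamma> \<sigma> y
    using m_pos xs_nonneg y_pos small C1 C3 C4 by unfold_locales
  have "t_opt m xs = (\<lambda>l. if l = 1 then tstar m xs 1 else tbar m xs l)"
    by (simp add: fun_eq_iff t_opt_def)
  with Ifun_eq_Sfun_t_opt show ?thesis
    by simp
qed

end
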